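(* Let $\delta\in(0,1]$ and let $\mathbf y_1,\ldots,\mathbf y_r\in\mathbb{R}^d$ be $r\le d$ unit-norm vectors such that for every $i\le r$, $\|P_{\mathrm{Span}(\mathbf y_j,\,j<i)^\perp}(\mathbf y_i)\|\ge\delta$. Let $\mathbf Y=[\mathbf y_1,\ldots,\mathbf y_r]$ and $s\ge2$. Then there exist $\lceil r/s\rceil$ orthonormal vectors $\mathbf Z=[\mathbf z_1,\ldots,\mathbf z_{\lceil r/s\rceil}]$ such that for every $\mathbf a\in\mathbb{R}^d$, $$\|\mathbf Z^\top\mathbf a\|_\infty\le\left(\frac{\sqrt d}{\delta}\right)^{s/(s-1)}\|\mathbf Y^\top\mathbf a\|_\infty.$$
   Context: For a linear subspace $E\subseteq\mathbb{R}^d$, $P_E$ denotes the orthogonal projection onto $E$; $\mathrm{Span}(\emptyset)=\{0\}$. *)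

theory Defs
  imports "HOL-Analysis.Analysis"
begin

definition orth_proj :: "'a::euclidean_space set \<Rightarrow> 'a \<Rightarrow> 'a" where
  "orth_proj E x = (THE p. p \<in> E \<and> (\<forall>e\<in>E. orthogonal (x - p) e))"

end

theory Submission
  imports Defs "Jordan_Normal_Form.Determinant"
begin

(* Write Q x = |Y^T x|^2 = (SUM j<r. (y j . x)^2). Choosing unit vectors u 0, u 1, ... of
   V = span {y j} that successively maximise Q on the orthogonal complement of their predecessors
   gives an orthonormal basis of V that is also Q-orthogonal, with Q (u i) decreasing (the left
   singular vectors of Y). For the coordinate matrix B = (u i . y j), B B^T is diagonal with
   entries Q (u i), while a unitriangular column operation turns B into the coordinate matrix C
   of the Gram-Schmidt residuals w j, whose Gram matrix C^T C is diagonal with entries |w j|^2.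
   So prod Q (u i) = (det B)^2 = prod |w j|^2 >= delta^(2r), and since every Q (u i) <= r this
   bounds Q (u k) from below for k = ceil (r/s) - 1. Finally Q (u i) u i = Y (Y^T u i), so by
   Cauchy-Schwarz |u i . a| <= sqrt (r / Q (u i)) |Y^T a|_oo, and z i = u i works. *)

hide_const (open) Matrix.orthogonal
no_notation Matrix.scalar_prod (infix "\<bullet>" 70)

lemma orth_proj_orthogonal_comp_span:
  fixes S :: "'a::euclidean_space set"
  assumes x: "x = p + w" and p: "p \<in> span S" and w: "\<And>v. v \<in> span S \<Longrightarrow> orthogonal w v"
  shows "orth_proj (orthogonal_comp (span S)) x = w"
  unfolding orth_proj_def
proof (rule the_equality)
  have w_comp: "w \<in> orthogonal_comp (span S)"
    using w by (auto simp: orthogonal_comp_def orthogonal_commute)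
  then show "w \<in> orthogonal_comp (span S) \<and> (\<forall>e\<in>orthogonal_comp (span S). orthogonal (x - w) e)"
    using p x by (auto simp: orthogonal_comp_def)
  fix q
  assume q: "q \<in> orthogonal_comp (span S) \<and> (\<forall>e\<in>orthogonal_comp (span S). orthogonal (x - q) e)"
  have "w - q \<in> orthogonal_comp (span S)"
    using q w_comp by (simp add: subspace_diff subspace_orthogonal_comp)
  then have "(x - q) \<bullet> (w - q) = 0" "p \<bullet> (w - q) = 0"
    using q p by (auto simp: orthogonal_comp_def real_inner_class.orthogonal_def)
  moreover have "x - q = p + (w - q)" using x by simp
  ultimately have "(w - q) \<bullet> (w - q) = 0" by (simp add: inner_add_left)
  then show "q = w" by simp
qed

lemma span_image_lessThan_sum:
  fixes n :: nat
  assumes "x \<in> span (f ` {..<n})"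
  shows "\<exists>c. x = (\<Sum>i<n. c i *\<^sub>R f i)"
  using assms
proof (induction n arbitrary: x)
  case (Suc n)
  obtain k where "x - k *\<^sub>R f n \<in> span (f ` {..<n})"
    using Suc.prems by (auto simp: lessThan_Suc span_insert)
  then obtain c where "x - k *\<^sub>R f n = (\<Sum>i<n. c i *\<^sub>R f i)"
    using Suc.IH by blast
  then have "x = (\<Sum>i<Suc n. (c(n := k)) i *\<^sub>R f i)" by (simp add: algebra_simps)
  then show ?case by blast
qed simp

definition gs_residual :: "(nat \<Rightarrow> 'a::euclidean_space) \<Rightarrow> nat \<Rightarrow> 'a" where
  "gs_residual y i = orth_proj (orthogonal_comp (span (y ` {..<i}))) (y i)"

lemma gs_residual_decomp:
  shows gs_residual_diff_in_span: "y i - gs_residual y i \<in> span (y ` {..<i})"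
    and orthogonal_gs_residual: "v \<in> span (y ` {..<i}) \<Longrightarrow> orthogonal (gs_residual y i) v"
proof -
  obtain p w where p: "p \<in> span (y ` {..<i})" and w: "\<And>v. v \<in> span (y ` {..<i}) \<Longrightarrow> orthogonal w v"
    and y: "y i = p + w"
    using orthogonal_subspace_decomp_exists by metis
  have "gs_residual y i = w"
    unfolding gs_residual_def by (rule orth_proj_orthogonal_comp_span[OF y p w])
  then show "y i - gs_residual y i \<in> span (y ` {..<i})"
    and "v \<in> span (y ` {..<i}) \<Longrightarrow> orthogonal (gs_residual y i) v"
    using p w y by auto
qed

lemma gs_residual_in_span: "gs_residual y i \<in> span (y ` {..i})"
proof -
  have "y i \<in> span (y ` {..i})" by (simp add: span_base)
  moreover have "span (y ` {..<i}) \<subseteq> span (y ` {..i})" by (intro span_mono) auto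
  then have "y i - gs_residual y i \<in> span (y ` {..i})"
    using gs_residual_diff_in_span by blast
  ultimately have "y i - (y i - gs_residual y i) \<in> span (y ` {..i})" by (rule span_diff)
  then show ?thesis by simp
qed

lemma gs_residual_pairwise_orthogonal:
  assumes "i \<noteq> j"
  shows "orthogonal (gs_residual y i) (gs_residual y j)"
proof -
  have "orthogonal (gs_residual y b) (gs_residual y a)" if "a < b" for a b
  proof -
    have "span (y ` {..a}) \<subseteq> span (y ` {..<b})" using that by (intro span_mono) auto
    then show ?thesis using gs_residual_in_span orthogonal_gs_residual by blast
  qed
  then show ?thesis using assms by (meson linorder_neqE_nat orthogonal_commute)
qed

lemma gs_residual_eq_sum: obtains c where "gs_residual y i = y i - (\<Sum>l<i. c l *\<^sub>R y l)"
proof -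
  obtain c where "y i - gs_residual y i = (\<Sum>l<i. c l *\<^sub>R y l)"
    using span_image_lessThan_sum[OF gs_residual_diff_in_span] by blast
  then show ?thesis by (intro that[of c]) (simp add: algebra_simps)
qed

lemma not_in_span_if_gs_residual_nonzero:
  assumes "gs_residual y i \<noteq> 0"
  shows "y i \<notin> span (y ` {..<i})"
proof
  assume "y i \<in> span (y ` {..<i})"
  then have "gs_residual y i \<in> span (y ` {..<i})"
    using span_diff[OF _ gs_residual_diff_in_span] by fastforce
  then have "orthogonal (gs_residual y i) (gs_residual y i)" by (rule orthogonal_gs_residual)
  with assms show False by (simp add: real_inner_class.orthogonal_def)
qed

lemma dim_if_gs_residual_nonzero:
  assumes "\<And>i. i < n \<Longrightarrow> gs_residual y i \<noteq> 0"
  shows "dim (y ` {..<n}) = n"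
  using assms
proof (induction n)
  case (Suc n)
  then show ?case
    using not_in_span_if_gs_residual_nonzero[of y n] by (simp add: lessThan_Suc dim_insert)
qed simp

definition orthonormal_upto :: "(nat \<Rightarrow> 'a::real_inner) \<Rightarrow> nat \<Rightarrow> bool" where
  "orthonormal_upto u n \<longleftrightarrow> (\<forall>i<n. \<forall>j<n. u i \<bullet> u j = (if i = j then 1 else 0))"

lemma orthonormal_upto_expansion:
  assumes u: "orthonormal_upto u n" and x: "x \<in> span (u ` {..<n})"
  shows "x = (\<Sum>i<n. (u i \<bullet> x) *\<^sub>R u i)"
proof -
  obtain c where c: "x = (\<Sum>i<n. c i *\<^sub>R u i)" using span_image_lessThan_sum[OF x] by blast
  have "u l \<bullet> x = c l" if "l < n" for l
  proof -
    have "u l \<bullet> x = (\<Sum>i<n. if i = l then c i else 0)"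
      unfolding c inner_sum_right using u that
      by (intro sum.cong) (auto simp: orthonormal_upto_def)
    then show ?thesis using that by simp
  qed
  then show ?thesis using c by simp
qed

lemma orthonormal_upto_inner:
  assumes "orthonormal_upto u n" "x \<in> span (u ` {..<n})"
  shows "x \<bullet> z = (\<Sum>i<n. (u i \<bullet> x) * (u i \<bullet> z))"
  by (subst orthonormal_upto_expansion[OF assms]) (simp add: inner_sum_left)

lemma span_eq_if_orthonormal_upto:
  fixes u :: "nat \<Rightarrow> 'a::euclidean_space"
  assumes u: "orthonormal_upto u n" and V: "subspace V" "u ` {..<n} \<subseteq> V" and dim: "dim V \<le> n"
  shows "span (u ` {..<n}) = V"
proof
  show "span (u ` {..<n}) \<subseteq> V" using V by (simp add: span_minimal)
  have inj: "inj_on u {..<n}"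
  proof (rule inj_onI)
    fix i j assume "i \<in> {..<n}" "j \<in> {..<n}" "u i = u j"
    then show "i = j" using u unfolding orthonormal_upto_def by (metis lessThan_iff zero_neq_one)
  qed
  have "pairwise orthogonal (u ` {..<n})" "0 \<notin> u ` {..<n}"
    using u by (force simp: orthonormal_upto_def pairwise_def real_inner_class.orthogonal_def)+
  then have "independent (u ` {..<n})" by (rule pairwise_orthogonal_independent)
  then show "V \<subseteq> span (u ` {..<n})"
    using card_ge_dim_independent[OF V(2)] dim card_image[OF inj] by simp
qed

lemma det_upper_triangular_prod:
  assumes A: "A \<in> carrier_mat n n" and zero: "\<And>i j. j < i \<Longrightarrow> i < n \<Longrightarrow> A $$ (i, j) = 0"
  shows "det A = (\<Prod>i<n. A $$ (i, i))"
proof -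
  have "upper_triangular A" using A zero by auto
  then have "det A = prod_list (diag_mat A)" using det_upper_triangular A by blast
  also have "\<dots> = (\<Prod>i<n. A $$ (i, i))" using A by (simp add: prod_list_diag_prod atLeast0LessThan)
  finally show ?thesis .
qed

definition coord_mat :: "nat \<Rightarrow> (nat \<Rightarrow> 'a::real_inner) \<Rightarrow> (nat \<Rightarrow> 'a) \<Rightarrow> real mat" where
  "coord_mat n u v = mat n n (\<lambda>(i, j). u i \<bullet> v j)"

lemma coord_mat_carrier [simp]: "coord_mat n u v \<in> carrier_mat n n"
  by (simp add: coord_mat_def)

lemma det_mult_transpose_self:
  assumes "A \<in> carrier_mat n n"
  shows "det (A * transpose_mat A) = (det A)\<^sup>2" "det (transpose_mat A * A) = (det A)\<^sup>2"
  using assms by (simp_all add: det_mult det_transpose power2_eq_square)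

lemma det_coord_mat_squared_rows:
  assumes "\<And>i l. l < i \<Longrightarrow> i < n \<Longrightarrow> (\<Sum>j<n. (u i \<bullet> v j) * (u l \<bullet> v j)) = 0"
  shows "(det (coord_mat n u v))\<^sup>2 = (\<Prod>i<n. \<Sum>j<n. (u i \<bullet> v j)\<^sup>2)"
proof -
  let ?A = "coord_mat n u v"
  have "(det ?A)\<^sup>2 = det (?A * transpose_mat ?A)" by (simp add: det_mult_transpose_self[OF coord_mat_carrier])
  also have "\<dots> = (\<Prod>i<n. (?A * transpose_mat ?A) $$ (i, i))"
    using assms by (intro det_upper_triangular_prod) (auto simp: coord_mat_def scalar_prod_def atLeast0LessThan)
  also have "\<dots> = (\<Prod>i<n. \<Sum>j<n. (u i \<bullet> v j)\<^sup>2)"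
    by (simp add: coord_mat_def scalar_prod_def atLeast0LessThan power2_eq_square)
  finally show ?thesis .
qed

lemma det_coord_mat_squared_cols:
  assumes u: "orthonormal_upto u n" and v: "\<And>j. j < n \<Longrightarrow> v j \<in> span (u ` {..<n})"
    and orth: "\<And>i j. j < i \<Longrightarrow> i < n \<Longrightarrow> v i \<bullet> v j = 0"
  shows "(det (coord_mat n u v))\<^sup>2 = (\<Prod>j<n. (norm (v j))\<^sup>2)"
proof -
  let ?A = "coord_mat n u v"
  have gram: "(transpose_mat ?A * ?A) $$ (i, j) = v i \<bullet> v j" if "i < n" "j < n" for i j
    using that orthonormal_upto_inner[OF u v]
    by (simp add: coord_mat_def scalar_prod_def atLeast0LessThan)
  have "(det ?A)\<^sup>2 = det (transpose_mat ?A * ?A)" by (simp add: det_mult_transpose_self[OF coord_mat_carrier])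
  also have "\<dots> = (\<Prod>j<n. (transpose_mat ?A * ?A) $$ (j, j))"
  proof (rule det_upper_triangular_prod)
    show "transpose_mat ?A * ?A \<in> carrier_mat n n"
      by (rule mult_carrier_mat[of _ n n]) simp_all
  qed (simp add: gram orth)
  also have "\<dots> = (\<Prod>j<n. (norm (v j))\<^sup>2)" by (simp add: gram power2_norm_eq_inner)
  finally show ?thesis .
qed

lemma det_coord_mat_unitriangular:
  assumes w: "\<And>j. j < n \<Longrightarrow> w j = v j - (\<Sum>l<j. c j l *\<^sub>R v l)"
  shows "det (coord_mat n u w) = det (coord_mat n u v)"
proof -
  define T where "T = mat n n (\<lambda>(l, j). if l = j then 1 else if l < j then - c j l else 0)"
  have T: "T \<in> carrier_mat n n" by (simp add: T_def)
  have "det T = 1"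
    using det_upper_triangular_prod[OF T] by (simp add: T_def)
  moreover have "coord_mat n u w = coord_mat n u v * T"
  proof (rule eq_matI)
    fix i j assume "i < dim_row (coord_mat n u v * T)" "j < dim_col (coord_mat n u v * T)"
    then have "i < n" "j < n" using T by (simp_all add: coord_mat_def)
    have "(coord_mat n u v * T) $$ (i, j)
        = (\<Sum>l<n. (if l = j then u i \<bullet> v j else 0) + (if l < j then - c j l * (u i \<bullet> v l) else 0))"
      using \<open>i < n\<close> \<open>j < n\<close> T
      by (auto simp: coord_mat_def T_def scalar_prod_def atLeast0LessThan intro!: sum.cong)
    also have "\<dots> = u i \<bullet> v j - (\<Sum>l<j. c j l * (u i \<bullet> v l))"
    proof -
      have "{..<n} \<inter> {..<j} = {..<j}" using \<open>j < n\<close> by auto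
      then show ?thesis
        using \<open>j < n\<close> by (simp add: sum.distrib sum.If_cases sum_negf lessThan_def[symmetric])
    qed
    also have "\<dots> = coord_mat n u w $$ (i, j)"
      using \<open>i < n\<close> \<open>j < n\<close> w by (simp add: coord_mat_def inner_diff_right inner_sum_right)
    finally show "coord_mat n u w $$ (i, j) = (coord_mat n u v * T) $$ (i, j)" ..
  qed (use T in \<open>auto simp: coord_mat_def\<close>)
  ultimately show ?thesis using det_mult[OF coord_mat_carrier T] by simp
qed

definition successive_maximizers ::
    "('a::real_inner \<Rightarrow> real) \<Rightarrow> 'a set \<Rightarrow> nat \<Rightarrow> (nat \<Rightarrow> 'a) \<Rightarrow> bool" where
  "successive_maximizers q V n u \<longleftrightarrow> orthonormal_upto u n \<and> u ` {..<n} \<subseteq> V \<and>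
     (\<forall>i<n. \<forall>x\<in>V. (\<forall>j<i. orthogonal x (u j)) \<longrightarrow> q x \<le> q (u i) * (norm x)\<^sup>2)"

lemma maximizer_on_sphere_exists:
  fixes q :: "'a::euclidean_space \<Rightarrow> real"
  assumes q: "continuous_on UNIV q" "\<And>c x. q (c *\<^sub>R x) = c\<^sup>2 * q x"
    and S: "subspace S" "w \<in> S" "w \<noteq> 0"
  obtains x0 where "x0 \<in> S" "norm x0 = 1" "\<And>x. x \<in> S \<Longrightarrow> q x \<le> q x0 * (norm x)\<^sup>2"
proof -
  have unit: "(1 / norm x) *\<^sub>R x \<in> S \<inter> sphere 0 1" if "x \<in> S" "x \<noteq> 0" for x
    using that S(1) by (simp add: subspace_scale)
  have "compact (S \<inter> sphere 0 1)"
    using S(1) by (simp add: closed_subspace closed_Int_compact)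
  moreover have "S \<inter> sphere 0 1 \<noteq> {}" using unit S(2,3) by blast
  moreover have "continuous_on (S \<inter> sphere 0 1) q" using q(1) continuous_on_subset by blast
  ultimately obtain x0 where x0: "x0 \<in> S \<inter> sphere 0 1"
    and max: "\<And>z. z \<in> S \<inter> sphere 0 1 \<Longrightarrow> q z \<le> q x0"
    using continuous_attains_sup by metis
  have "q x \<le> q x0 * (norm x)\<^sup>2" if "x \<in> S" for x
  proof (cases "x = 0")
    case True
    then show ?thesis using q(2)[of 0 0] by simp
  next
    case False
    then have "q x / (norm x)\<^sup>2 \<le> q x0"
      using max[OF unit[OF that False]] by (simp add: q(2) power_divide)
    then show ?thesis using False by (simp add: divide_le_eq)
  qed
  then show ?thesis using x0 by (intro that) auto
qed

lemma successive_maximizers_antimono: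
  assumes u: "successive_maximizers q V n u" and "i \<le> l" "l < n"
  shows "q (u l) \<le> q (u i)"
proof -
  have "u l \<in> V" "norm (u l) = 1" using u assms(3)
    by (auto simp: successive_maximizers_def orthonormal_upto_def norm_eq_1)
  moreover have "\<forall>j<i. orthogonal (u l) (u j)"
    using u assms(2,3) by (auto simp: successive_maximizers_def orthonormal_upto_def
        real_inner_class.orthogonal_def)
  moreover have "\<forall>x\<in>V. (\<forall>j<i. orthogonal x (u j)) \<longrightarrow> q x \<le> q (u i) * (norm x)\<^sup>2"
    using u assms(2,3) by (simp add: successive_maximizers_def)
  ultimately have "q (u l) \<le> q (u i) * (norm (u l))\<^sup>2" by blast
  with \<open>norm (u l) = 1\<close> show ?thesis by simp
qed

lemma exists_nonzero_orthogonal_in_subspace: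
  fixes u :: "nat \<Rightarrow> 'a::euclidean_space"
  assumes V: "subspace V" "u ` {..<n} \<subseteq> V" and "n < dim V"
  obtains w where "w \<in> V" "w \<noteq> 0" "\<And>j. j < n \<Longrightarrow> orthogonal (u j) w"
proof -
  have "\<not> V \<subseteq> span (u ` {..<n})"
    using dim_le_card[of V "u ` {..<n}"] card_image_le[of "{..<n}" u] \<open>n < dim V\<close> by auto
  then obtain v where v: "v \<in> V" "v \<notin> span (u ` {..<n})" by blast
  obtain p w where p: "p \<in> span (u ` {..<n})" and w: "\<And>x. x \<in> span (u ` {..<n}) \<Longrightarrow> orthogonal w x"
    and "v = p + w"
    using orthogonal_subspace_decomp_exists by metis
  moreover have "p \<in> V" using p V by (meson span_minimal subsetD)
  ultimately have "w \<in> V" "w \<noteq> 0"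
    using v V by (auto dest: subspace_diff[of V v p])
  moreover have "orthogonal (u j) w" if "j < n" for j
    using w[of "u j"] that by (simp add: span_base orthogonal_commute)
  ultimately show ?thesis using that by blast
qed

lemma successive_maximizers_exist:
  fixes q :: "'a::euclidean_space \<Rightarrow> real"
  assumes q: "continuous_on UNIV q" "\<And>c x. q (c *\<^sub>R x) = c\<^sup>2 * q x"
    and V: "subspace V" and "n \<le> dim V"
  shows "\<exists>u. successive_maximizers q V n u"
  using \<open>n \<le> dim V\<close>
proof (induction n)
  case 0
  then show ?case by (simp add: successive_maximizers_def orthonormal_upto_def)
next
  case (Suc n)
  then obtain u where u: "successive_maximizers q V n u" by auto
  define S where "S = V \<inter> orthogonal_comp (u ` {..<n})"
  have S: "subspace S" unfolding S_def using V by (simp add: subspace_inter subspace_orthogonal_comp)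
  have "u ` {..<n} \<subseteq> V" using u by (simp add: successive_maximizers_def)
  then obtain w where "w \<in> V" "w \<noteq> 0" "\<And>j. j < n \<Longrightarrow> orthogonal (u j) w"
    using exists_nonzero_orthogonal_in_subspace[OF V] Suc.prems by (metis Suc_le_lessD)
  then have "w \<in> S" "w \<noteq> 0" by (auto simp: S_def orthogonal_comp_def)
  then obtain x0 where x0: "x0 \<in> S" "norm x0 = 1" and max: "\<And>x. x \<in> S \<Longrightarrow> q x \<le> q x0 * (norm x)\<^sup>2"
    using maximizer_on_sphere_exists[OF q S] by blast
  have "x0 \<in> V" "\<forall>j<n. u j \<bullet> x0 = 0" "x0 \<bullet> x0 = 1"
    using x0 by (auto simp: S_def orthogonal_comp_def real_inner_class.orthogonal_def norm_eq_1)
  then have "orthonormal_upto (u(n := x0)) (Suc n)"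
    using u by (auto simp: successive_maximizers_def orthonormal_upto_def less_Suc_eq inner_commute)
  moreover have "x \<in> S" if "x \<in> V" "\<forall>j<n. orthogonal x (u j)" for x
    using that by (auto simp: S_def orthogonal_comp_def orthogonal_commute)
  ultimately have "successive_maximizers q V (Suc n) (u(n := x0))"
    using u \<open>x0 \<in> V\<close> max by (auto simp: successive_maximizers_def less_Suc_eq)
  then show ?case by blast
qed

lemma linear_le_quadratic_imp_zero:
  fixes b c :: real
  assumes "\<And>t. 2 * t * b \<le> t\<^sup>2 * c"
  shows "b = 0"
proof (rule ccontr)
  assume "b \<noteq> 0"
  define M where "M = \<bar>c\<bar> + 1"
  have M: "M > 0" unfolding M_def by simp
  have "2 * (b / M) * b \<le> (b / M)\<^sup>2 * c" by (rule assms)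
  then have "2 * b\<^sup>2 / M \<le> b\<^sup>2 * c / M\<^sup>2" by (simp add: power2_eq_square power_divide)
  then have "2 * b\<^sup>2 * M \<le> b\<^sup>2 * c" using M by (simp add: field_simps power2_eq_square)
  then have "2 * M \<le> c" using \<open>b \<noteq> 0\<close> by (simp add: mult.commute mult.left_commute)
  then show False unfolding M_def by (cases "c \<ge> 0") auto
qed

locale frame =
  fixes y :: "nat \<Rightarrow> 'a::euclidean_space" and r :: nat
begin

definition Q :: "'a \<Rightarrow> real" where
  "Q x = (\<Sum>j<r. (y j \<bullet> x)\<^sup>2)"

definition Q_polar :: "'a \<Rightarrow> 'a \<Rightarrow> real" where
  "Q_polar x z = (\<Sum>j<r. (y j \<bullet> x) * (y j \<bullet> z))"

lemma Q_scaleR: "Q (c *\<^sub>R x) = c\<^sup>2 * Q x"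
  unfolding Q_def by (simp add: power_mult_distrib sum_distrib_left)

lemma Q_add_scaleR: "Q (x + t *\<^sub>R z) = Q x + 2 * t * Q_polar x z + t\<^sup>2 * Q z"
  unfolding Q_def Q_polar_def
  by (simp add: inner_add_right power2_eq_square algebra_simps sum.distrib sum_distrib_left)

lemma Q_nonneg: "0 \<le> Q x"
  unfolding Q_def by (simp add: sum_nonneg)

lemma continuous_on_Q: "continuous_on A Q"
  unfolding Q_def by (intro continuous_intros)

lemma Q_polar_commute: "Q_polar x z = Q_polar z x"
  unfolding Q_polar_def by (simp add: mult.commute)

lemma Q_polar_self: "Q_polar x x = Q x"
  unfolding Q_polar_def Q_def by (simp add: power2_eq_square)

lemma Q_polar_successive_maximizers:
  assumes u: "successive_maximizers Q V n u" and V: "subspace V" and "i < l" "l < n"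
  shows "Q_polar (u i) (u l) = 0"
proof (rule linear_le_quadratic_imp_zero)
  fix t :: real
  have inner: "u i \<bullet> u i = 1" "u l \<bullet> u l = 1" "u i \<bullet> u l = 0" "u l \<bullet> u i = 0"
      "\<forall>j<i. u i \<bullet> u j = 0 \<and> u l \<bullet> u j = 0"
    using u assms(3,4) by (auto simp: successive_maximizers_def orthonormal_upto_def)
  define x where "x = u i + t *\<^sub>R u l"
  have "u i \<in> V" "u l \<in> V" using u assms(3,4) by (auto simp: successive_maximizers_def)
  then have "x \<in> V" unfolding x_def using V by (simp add: subspace_add subspace_scale)
  moreover have "\<forall>j<i. orthogonal x (u j)"
    using inner by (simp add: x_def real_inner_class.orthogonal_def inner_add_left)
  ultimately have "Q x \<le> Q (u i) * (norm x)\<^sup>2"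
    using u assms(3,4) by (auto simp: successive_maximizers_def)
  moreover have "(norm x)\<^sup>2 = 1 + t\<^sup>2"
  proof -
    have "(norm x)\<^sup>2 = x \<bullet> x" by (simp add: power2_norm_eq_inner)
    also have "\<dots> = 1 + t\<^sup>2"
      using inner by (simp add: x_def inner_add_left inner_add_right power2_eq_square)
    finally show ?thesis .
  qed
  ultimately show "2 * t * Q_polar (u i) (u l) \<le> t\<^sup>2 * (Q (u i) - Q (u l))"
    by (simp add: x_def Q_add_scaleR algebra_simps)
qed

lemma span_successive_maximizers:
  assumes "successive_maximizers Q (span (y ` {..<r})) r u" and "dim (y ` {..<r}) = r"
  shows "span (u ` {..<r}) = span (y ` {..<r})"
  using assms by (intro span_eq_if_orthonormal_upto) (auto simp: successive_maximizers_def dim_span)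

lemma successive_maximizer_eigen:
  assumes u: "successive_maximizers Q (span (y ` {..<r})) r u" and dim: "dim (y ` {..<r}) = r"
    and i: "i < r"
  shows "(\<Sum>j<r. (u i \<bullet> y j) *\<^sub>R y j) = Q (u i) *\<^sub>R u i"
proof -
  let ?v = "\<Sum>j<r. (u i \<bullet> y j) *\<^sub>R y j"
  have orth: "orthonormal_upto u r" using u by (simp add: successive_maximizers_def)
  have "?v \<in> span (u ` {..<r})"
    unfolding span_successive_maximizers[OF u dim] by (intro span_sum span_scale span_base) auto
  then have "?v = (\<Sum>l<r. (u l \<bullet> ?v) *\<^sub>R u l)" by (rule orthonormal_upto_expansion[OF orth])
  also have "\<dots> = (\<Sum>l<r. (if l = i then Q (u i) *\<^sub>R u i else 0))"
  proof (rule sum.cong)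
    fix l assume "l \<in> {..<r}"
    have "u l \<bullet> ?v = Q_polar (u i) (u l)"
      by (simp add: Q_polar_def inner_sum_right inner_commute mult.commute)
    also have "\<dots> = (if l = i then Q (u i) else 0)"
      using Q_polar_successive_maximizers[OF u subspace_span, of i l]
        Q_polar_successive_maximizers[OF u subspace_span, of l i] \<open>l \<in> {..<r}\<close> i
      by (auto simp: Q_polar_self Q_polar_commute[of "u i"] dest: linorder_neqE_nat)
    finally show "(u l \<bullet> ?v) *\<^sub>R u l = (if l = i then Q (u i) *\<^sub>R u i else 0)" by simp
  qed simp
  finally show ?thesis using i by simp
qed

lemma sqrt_Q_mult_abs_inner_le:
  assumes u: "successive_maximizers Q (span (y ` {..<r})) r u" and dim: "dim (y ` {..<r}) = r"
    and i: "i < r"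
  shows "sqrt (Q (u i)) * \<bar>u i \<bullet> a\<bar> \<le> sqrt r * (MAX j\<in>{..<r}. \<bar>y j \<bullet> a\<bar>)"
proof -
  define M where "M = (MAX j\<in>{..<r}. \<bar>y j \<bullet> a\<bar>)"
  define c where "c j = u i \<bullet> y j" for j
  have M: "\<bar>y j \<bullet> a\<bar> \<le> M" if "j < r" for j unfolding M_def using that by (intro Max_ge) auto
  have "M \<ge> 0" using M[OF i] by simp
  have Q: "Q (u i) = (\<Sum>j<r. (c j)\<^sup>2)" by (simp add: Q_def c_def inner_commute)
  have "Q (u i) * (u i \<bullet> a) = (\<Sum>j<r. c j * (y j \<bullet> a))"
    using arg_cong[OF successive_maximizer_eigen[OF u dim i], of "\<lambda>v. v \<bullet> a"]
    by (simp add: c_def inner_sum_left)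
  then have "Q (u i) * \<bar>u i \<bullet> a\<bar> = \<bar>\<Sum>j<r. c j * (y j \<bullet> a)\<bar>"
    using Q_nonneg by (metis abs_mult abs_of_nonneg)
  also have "\<dots> \<le> (\<Sum>j<r. \<bar>c j\<bar> * \<bar>y j \<bullet> a\<bar>)"
    unfolding abs_mult[symmetric] by (rule sum_abs)
  also have "\<dots> \<le> (\<Sum>j<r. \<bar>c j\<bar>) * M"
    unfolding sum_distrib_right by (intro sum_mono mult_left_mono) (auto simp: M)
  also have "(\<Sum>j<r. \<bar>c j\<bar>) \<le> sqrt r * sqrt (Q (u i))"
  proof -
    have "(\<Sum>j<r. \<bar>c j\<bar>)\<^sup>2 \<le> (\<Sum>j<r. \<bar>c j\<bar>\<^sup>2) * card {..<r}"
      by (rule sum_squared_le_sum_of_squares)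
    then have "(\<Sum>j<r. \<bar>c j\<bar>) \<le> sqrt (r * Q (u i))" by (simp add: Q real_le_rsqrt mult.commute)
    then show ?thesis by (simp add: real_sqrt_mult)
  qed
  finally have "sqrt (Q (u i)) * (sqrt (Q (u i)) * \<bar>u i \<bullet> a\<bar>) \<le> sqrt (Q (u i)) * (sqrt r * M)"
    using \<open>M \<ge> 0\<close> Q_nonneg by (simp add: mult_right_mono mult_ac)
  then show ?thesis
    unfolding M_def[symmetric] using \<open>M \<ge> 0\<close> Q_nonneg[of "u i"]
    by (cases "Q (u i) = 0") (auto dest: mult_left_le_imp_le)
qed

lemma prod_Q_eq_prod_gs_residual:
  assumes u: "successive_maximizers Q (span (y ` {..<r})) r u" and dim: "dim (y ` {..<r}) = r"
  shows "(\<Prod>i<r. Q (u i)) = (\<Prod>j<r. (norm (gs_residual y j))\<^sup>2)"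
proof -
  have orth: "orthonormal_upto u r" using u by (simp add: successive_maximizers_def)
  have span: "span (u ` {..<r}) = span (y ` {..<r})" by (rule span_successive_maximizers[OF u dim])
  have "\<forall>j. \<exists>c. gs_residual y j = y j - (\<Sum>l<j. c l *\<^sub>R y l)"
    using gs_residual_eq_sum by blast
  then obtain c where "\<And>j. gs_residual y j = y j - (\<Sum>l<j. c j l *\<^sub>R y l)" by (metis choice)
  then have "det (coord_mat r u (gs_residual y)) = det (coord_mat r u y)"
    by (intro det_coord_mat_unitriangular)
  moreover have "(det (coord_mat r u y))\<^sup>2 = (\<Prod>i<r. Q (u i))"
  proof (subst det_coord_mat_squared_rows)
    fix i l assume "l < i" "i < r"
    then have "Q_polar (u i) (u l) = 0"
      using Q_polar_successive_maximizers[OF u subspace_span, of l i] by (simp add: Q_polar_commute)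
    then show "(\<Sum>j<r. (u i \<bullet> y j) * (u l \<bullet> y j)) = 0" by (simp add: Q_polar_def inner_commute)
  qed (simp add: Q_def inner_commute)
  moreover have "(det (coord_mat r u (gs_residual y)))\<^sup>2 = (\<Prod>j<r. (norm (gs_residual y j))\<^sup>2)"
  proof (rule det_coord_mat_squared_cols[OF orth])
    show "gs_residual y j \<in> span (u ` {..<r})" if "j < r" for j
      unfolding span using that span_mono[of "y ` {..j}" "y ` {..<r}"] gs_residual_in_span by fastforce
    show "gs_residual y i \<bullet> gs_residual y j = 0" if "j < i" for i j
      using that gs_residual_pairwise_orthogonal[of i j y] by (simp add: real_inner_class.orthogonal_def)
  qed
  ultimately show ?thesis by simp
qed

end

lemma sqrt_ratio_le_powr_if_power_mult_ge:
  fixes \<mu> \<delta> :: real and d r s \<kappa> :: nat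
  assumes \<delta>: "0 < \<delta>" "\<delta> \<le> 1" and "r \<le> d" "2 \<le> s" "\<kappa> < r" "s * \<kappa> \<le> r" "0 < \<mu>"
    and prod: "\<delta> ^ (2 * r) \<le> \<mu> ^ (r - \<kappa>) * real r ^ \<kappa>"
  shows "sqrt (real r / \<mu>) \<le> (sqrt (real d) / \<delta>) powr (real s / (real s - 1))"
proof -
  define m where "m = r - \<kappa>"
  define p where "p = real s / (real s - 1)"
  have "m > 0" "r = m + \<kappa>" using \<open>\<kappa> < r\<close> by (auto simp: m_def)
  have X: "real r / \<delta>\<^sup>2 > 0" using \<open>\<kappa> < r\<close> \<delta> by simp
  have "(real r / \<mu>) ^ m = real r ^ m / \<mu> ^ m" by (simp add: power_divide)
  also have "\<dots> \<le> real r ^ m * (real r ^ \<kappa> / \<delta> ^ (2 * r))"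
    using mult_left_mono[OF prod, of "real r ^ m"] \<open>0 < \<mu>\<close> \<delta> by (simp add: m_def field_simps mult_ac)
  also have "\<dots> = (real r / \<delta>\<^sup>2) ^ r"
    by (simp add: \<open>r = m + \<kappa>\<close> power_add power_divide power_mult[symmetric] mult.commute)
  finally have "((real r / \<mu>) ^ m) powr (1 / m) \<le> ((real r / \<delta>\<^sup>2) ^ r) powr (1 / m)"
    using \<open>0 < \<mu>\<close> \<open>m > 0\<close> by (intro powr_mono2) auto
  then have "real r / \<mu> \<le> (real r / \<delta>\<^sup>2) powr (real r / real m)"
    using \<open>0 < \<mu>\<close> \<open>m > 0\<close> X \<open>\<kappa> < r\<close> by (simp add: powr_realpow[symmetric] powr_powr)
  also have "\<dots> \<le> (real d / \<delta>\<^sup>2) powr (real r / real m)"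
    using \<open>r \<le> d\<close> X by (intro powr_mono2 divide_right_mono) auto
  also have "\<dots> \<le> (real d / \<delta>\<^sup>2) powr p"
    unfolding p_def
  proof (rule powr_mono)
    have "real r * (real s - 1) \<le> real s * real m"
      using \<open>s * \<kappa> \<le> r\<close> \<open>r = m + \<kappa>\<close> by (simp add: algebra_simps flip: of_nat_mult)
    then show "real r / real m \<le> real s / (real s - 1)"
      using \<open>m > 0\<close> \<open>2 \<le> s\<close> by (simp add: field_simps)
    have "\<delta>\<^sup>2 \<le> 1" using \<delta> by (simp add: power_le_one)
    then show "1 \<le> real d / \<delta>\<^sup>2" using \<delta> \<open>r \<le> d\<close> \<open>\<kappa> < r\<close> by (simp add: field_simps)
  qed
  also have "\<dots> = ((sqrt (real d) / \<delta>) powr p)\<^sup>2"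
    using \<delta> by (simp add: power_divide powr_mult[symmetric] power2_eq_square)
  finally show ?thesis by (simp add: p_def real_le_lsqrt)
qed

lemma nat_ceiling_divide_bounds:
  fixes r s :: nat
  assumes "0 < r" "0 < s"
  shows "0 < nat \<lceil>real r / real s\<rceil>" "nat \<lceil>real r / real s\<rceil> \<le> r"
    "s * (nat \<lceil>real r / real s\<rceil> - 1) < r"
proof -
  have "0 < real r / real s" "real r / real s \<le> real r"
    using assms by (auto simp: field_simps)
  then show "0 < nat \<lceil>real r / real s\<rceil>" "nat \<lceil>real r / real s\<rceil> \<le> r"
    by (auto simp: ceiling_le_iff)
  have "real (nat \<lceil>real r / real s\<rceil> - 1) < real r / real s"
    using ceiling_correct[of "real r / real s"] \<open>0 < real r / real s\<close> by (simp add: of_nat_diff)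
  then show "s * (nat \<lceil>real r / real s\<rceil> - 1) < r"
    using assms by (simp add: field_simps flip: of_nat_mult)
qed

locale separated_frame = frame +
  fixes \<delta> :: real
  assumes delta_pos: "0 < \<delta>" and delta_le_one: "\<delta> \<le> 1"
    and norm_y: "\<And>i. i < r \<Longrightarrow> norm (y i) = 1"
    and norm_gs_residual_ge: "\<And>i. i < r \<Longrightarrow> \<delta> \<le> norm (gs_residual y i)"
begin

lemma dim_y: "dim (y ` {..<r}) = r"
  using norm_gs_residual_ge delta_pos by (intro dim_if_gs_residual_nonzero) force

lemma Q_le: "Q x \<le> r * (norm x)\<^sup>2"
proof -
  have "(y j \<bullet> x)\<^sup>2 \<le> (norm x)\<^sup>2" if "j < r" for j
    using Cauchy_Schwarz_ineq2[of "y j" x] norm_y[OF that]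
    by (simp flip: abs_le_square_iff)
  then have "Q x \<le> (\<Sum>j<r. (norm x)\<^sup>2)" unfolding Q_def by (intro sum_mono) auto
  then show ?thesis by simp
qed

lemma Q_power_bound:
  assumes u: "successive_maximizers Q (span (y ` {..<r})) r u" and "\<kappa> < r"
  shows "\<delta> ^ (2 * r) \<le> Q (u \<kappa>) ^ (r - \<kappa>) * real r ^ \<kappa>"
proof -
  have norm_u: "norm (u i) = 1" if "i < r" for i
    using u that by (auto simp: successive_maximizers_def orthonormal_upto_def norm_eq_1)
  have "\<delta> ^ (2 * r) = (\<Prod>j<r. \<delta>\<^sup>2)" by (simp add: power_mult)
  also have "\<dots> \<le> (\<Prod>j<r. (norm (gs_residual y j))\<^sup>2)"
    using delta_pos norm_gs_residual_ge by (intro prod_mono) (auto intro: power_mono)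
  also have "\<dots> = (\<Prod>i<r. Q (u i))" by (rule prod_Q_eq_prod_gs_residual[OF u dim_y, symmetric])
  also have "\<dots> = (\<Prod>i<\<kappa>. Q (u i)) * (\<Prod>i\<in>{\<kappa>..<r}. Q (u i))"
    using \<open>\<kappa> < r\<close> by (simp add: prod.atLeastLessThan_concat lessThan_atLeast0)
  also have "\<dots> \<le> real r ^ \<kappa> * Q (u \<kappa>) ^ (r - \<kappa>)"
  proof (intro mult_mono prod_nonneg)
    have "Q (u i) \<le> r" if "i < \<kappa>" for i
      using Q_le[of "u i"] norm_u[of i] that \<open>\<kappa> < r\<close> by simp
    then have "(\<Prod>i<\<kappa>. Q (u i)) \<le> (\<Prod>i<\<kappa>. real r)"
      using Q_nonneg by (intro prod_mono) auto
    then show "(\<Prod>i<\<kappa>. Q (u i)) \<le> real r ^ \<kappa>" by simp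
    have "(\<Prod>i\<in>{\<kappa>..<r}. Q (u i)) \<le> (\<Prod>i\<in>{\<kappa>..<r}. Q (u \<kappa>))"
      using Q_nonneg successive_maximizers_antimono[OF u] by (intro prod_mono) auto
    then show "(\<Prod>i\<in>{\<kappa>..<r}. Q (u i)) \<le> Q (u \<kappa>) ^ (r - \<kappa>)" by simp
  qed (simp_all add: Q_nonneg)
  finally show ?thesis by (simp add: mult.commute)
qed

lemma abs_inner_successive_maximizer_le:
  assumes u: "successive_maximizers Q (span (y ` {..<r})) r u"
    and "r \<le> DIM('a)" "2 \<le> s" "\<kappa> < r" "s * \<kappa> \<le> r" "i \<le> \<kappa>"
  shows "\<bar>u i \<bullet> a\<bar>
    \<le> (sqrt DIM('a) / \<delta>) powr (real s / (real s - 1)) * (MAX j\<in>{..<r}. \<bar>y j \<bullet> a\<bar>)"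
proof -
  define M where "M = (MAX j\<in>{..<r}. \<bar>y j \<bullet> a\<bar>)"
  have "M \<ge> 0" unfolding M_def using \<open>\<kappa> < r\<close> by (intro order_trans[OF abs_ge_zero Max_ge]) auto
  have prod: "\<delta> ^ (2 * r) \<le> Q (u \<kappa>) ^ (r - \<kappa>) * real r ^ \<kappa>" by (rule Q_power_bound[OF u \<open>\<kappa> < r\<close>])
  have "Q (u \<kappa>) \<noteq> 0"
    using prod zero_less_power[OF delta_pos, of "2 * r"] \<open>\<kappa> < r\<close> by (auto simp: zero_power)
  then have Q\<kappa>: "0 < Q (u \<kappa>)" using Q_nonneg[of "u \<kappa>"] by simp
  have Qi: "Q (u \<kappa>) \<le> Q (u i)" using successive_maximizers_antimono[OF u \<open>i \<le> \<kappa>\<close> \<open>\<kappa> < r\<close>] .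
  have "sqrt (Q (u i)) * \<bar>u i \<bullet> a\<bar> \<le> sqrt r * M"
    unfolding M_def using sqrt_Q_mult_abs_inner_le[OF u dim_y] assms by simp
  then have "\<bar>u i \<bullet> a\<bar> \<le> sqrt (r / Q (u i)) * M"
    using Q\<kappa> Qi by (simp add: real_sqrt_divide field_simps)
  also have "\<dots> \<le> sqrt (r / Q (u \<kappa>)) * M"
    using Q\<kappa> Qi \<open>M \<ge> 0\<close> by (intro mult_right_mono real_sqrt_le_mono divide_left_mono) auto
  also have "\<dots> \<le> (sqrt DIM('a) / \<delta>) powr (real s / (real s - 1)) * M"
    using sqrt_ratio_le_powr_if_power_mult_ge[OF delta_pos delta_le_one assms(2-5) Q\<kappa> prod] \<open>M \<ge> 0\<close>
    by (rule mult_right_mono)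
  finally show ?thesis unfolding M_def .
qed

end

theorem lemma22:
  fixes y :: "nat \<Rightarrow> 'a::euclidean_space" and r s :: nat and \<delta> :: real
  assumes "0 < \<delta>" and "\<delta> \<le> 1"
    and "r \<le> DIM('a)"
    and "\<And>i. i < r \<Longrightarrow> norm (y i) = 1"
    and "\<And>i. i < r \<Longrightarrow> norm (orth_proj (orthogonal_comp (span (y ` {..<i}))) (y i)) \<ge> \<delta>"
    and "s \<ge> 2"
  shows "\<exists>z :: nat \<Rightarrow> 'a.
           (\<forall>i < nat \<lceil>real r / real s\<rceil>. norm (z i) = 1) \<and>
           (\<forall>i < nat \<lceil>real r / real s\<rceil>. \<forall>j < nat \<lceil>real r / real s\<rceil>. i \<noteq> j \<longrightarrow> orthogonal (z i) (z j)) \<and>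
           (\<forall>a :: 'a. \<forall>i < nat \<lceil>real r / real s\<rceil>.
              \<bar>z i \<bullet> a\<bar> \<le> (sqrt (real DIM('a)) / \<delta>) powr (real s / (real s - 1))
                               * (MAX j \<in> {..<r}. \<bar>y j \<bullet> a\<bar>))"
proof (cases "r = 0")
  case True
  then show ?thesis by simp
next
  case False
  interpret separated_frame y r \<delta>
    using assms by unfold_locales (auto simp: gs_residual_def)
  have "r \<le> dim (span (y ` {..<r}))" by (simp add: dim_span dim_y)
  then obtain u where u: "successive_maximizers Q (span (y ` {..<r})) r u"
    using successive_maximizers_exist[OF continuous_on_Q Q_scaleR subspace_span] by blast
  then have orth: "orthonormal_upto u r" by (simp add: successive_maximizers_def)
  define k where "k = nat \<lceil>real r / real s\<rceil>"
  have k: "0 < k" "k \<le> r" "s * (k - 1) < r"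
    unfolding k_def using nat_ceiling_divide_bounds False assms(6) by simp_all
  show ?thesis
    unfolding k_def[symmetric]
  proof (intro exI[of _ u] conjI allI impI)
    show "norm (u i) = 1" if "i < k" for i
      using orth that k by (simp add: orthonormal_upto_def norm_eq_1)
    show "orthogonal (u i) (u j)" if "i < k" "j < k" "i \<noteq> j" for i j
      using orth that k by (simp add: orthonormal_upto_def real_inner_class.orthogonal_def)
    show "\<bar>u i \<bullet> a\<bar>
        \<le> (sqrt DIM('a) / \<delta>) powr (real s / (real s - 1)) * (MAX j\<in>{..<r}. \<bar>y j \<bullet> a\<bar>)"
      if "i < k" for a i
      using abs_inner_successive_maximizer_le[OF u assms(3,6), of "k - 1"] that k by simp
  qed
qed

end
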